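(* Let $N=pq$ with $p,q$ distinct primes. Let $b\in\mathbb{Z}$ and let $f=n_2X^2+n_1X+n_0\in\mathbb{Z}[X]$ be of degree $2$ with $f(b)=N$. If $\gcd(n_2b,N)=1$ and $\gcd(N,n_2b^2-n_0)=1$, then $\nu(f)=2p+2q-8$.
   Context: $Z_N=\{0,1,\dots,N-1\}$. For $g\in\mathbb{Z}[X]$, an element $x\in Z_N$ is called suitable for $g$ if $1<\gcd(g(x),N)<N$, and $\nu(g)$ denotes the number of $x\in Z_N$ suitable for $g$. *)

theory Defs
  imports "HOL-Computational_Algebra.Computational_Algebra"
begin

definition suitable :: "int \<Rightarrow> int poly \<Rightarrow> int \<Rightarrow> bool" where
  "suitable N g x \<longleftrightarrow> x \<in> {0..<N} \<and> 1 < gcd (poly g x) N \<and> gcd (poly g x) N < N"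

definition nu :: "int \<Rightarrow> int poly \<Rightarrow> nat" where
  "nu N g = card {x \<in> {0..<N}. suitable N g x}"

end

theory Submission
  imports Defs "HOL-Number_Theory.Cong"
begin

text \<open>Since f(b) = N, we have f(x) = N + (x - b)(n2 x + n2 b + n1), so modulo each prime
  factor r of N the polynomial f splits into two linear factors. Both have unit leading
  coefficient mod r, and their roots differ because a common root would force
  r | n2 b^2 - n0. Hence f has exactly two roots mod p and two mod q. A residue x is suitable
  exactly when f(x) is divisible by one of p, q but not the other, and by the Chinese
  remainder theorem these are counted as 2 (q - 2) + (p - 2) 2.\<close>

lemma cong_poly:
  fixes f :: "'a :: {unique_euclidean_ring} poly"
  assumes "[x = y] (mod n)"
  shows "[poly f x = poly f y] (mod n)"
proof (induction f)
  case (pCons c f)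
  show ?case using cong_add[OF cong_refl cong_mult[OF assms pCons.IH], of c] by simp
qed simp

definition roots_mod :: "int \<Rightarrow> int poly \<Rightarrow> int set" where
  "roots_mod r f = {y \<in> {0..<r}. r dvd poly f y}"

lemma roots_mod_subset: "roots_mod r f \<subseteq> {0..<r}"
  by (auto simp: roots_mod_def)

lemma dvd_poly_iff_mod_in_roots_mod:
  assumes "r > 0"
  shows "r dvd poly f x \<longleftrightarrow> x mod r \<in> roots_mod r f"
  using cong_poly[of x "x mod r" r f] assms by (simp add: roots_mod_def cong_dvd_iff cong_sym)

lemma card_linear_roots_mod:
  fixes n a c :: int
  assumes "n > 0" "coprime a n"
  shows "card {y \<in> {0..<n}. n dvd a * y + c} = 1"
proof -
  obtain a' where a': "[a * a' = 1] (mod n)"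
    using cong_solve_coprime_int assms(2) by blast
  have inverse: "[a * (-c * a') = -c] (mod n)"
    using cong_scalar_left[OF a', of "-c"] by (simp add: ac_simps)
  have "n dvd a * y + c \<longleftrightarrow> [a * y = -c] (mod n)" for y
    by (simp add: cong_iff_dvd_diff)
  also have "[a * y = -c] (mod n) \<longleftrightarrow> [a * y = a * (-c * a')] (mod n)" for y
  proof
    assume "[a * y = -c] (mod n)"
    then show "[a * y = a * (-c * a')] (mod n)" using cong_sym[OF inverse] by (rule cong_trans)
  next
    assume "[a * y = a * (-c * a')] (mod n)"
    then show "[a * y = -c] (mod n)" using inverse by (rule cong_trans)
  qed
  also have "[a * y = a * (-c * a')] (mod n) \<longleftrightarrow> [y = -c * a'] (mod n)" for y
    by (rule cong_mult_lcancel[OF assms(2)])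
  finally have root_iff: "n dvd a * y + c \<longleftrightarrow> [y = -c * a'] (mod n)" for y .
  have "[y = -c * a'] (mod n) \<longleftrightarrow> y = (-c * a') mod n" if "y \<in> {0..<n}" for y
    using that by (simp add: cong_def)
  then have "{y \<in> {0..<n}. n dvd a * y + c} = {(-c * a') mod n}"
    using assms(1) root_iff by auto
  then show ?thesis by simp
qed

lemma quadratic_shift_factor:
  fixes n2 n1 n0 b y :: "'a :: comm_ring_1"
  shows "n2 * y^2 + n1 * y + n0 = (n2 * b^2 + n1 * b + n0) + (y - b) * (n2 * y + (n2 * b + n1))"
  by (simp add: algebra_simps power2_eq_square)

lemma card_roots_mod_quadratic:
  fixes r b n0 n1 n2 :: int
  assumes "prime r" "r dvd poly [:n0, n1, n2:] b"
    and "coprime n2 r" "\<not> r dvd n2 * b^2 - n0"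
  shows "card (roots_mod r [:n0, n1, n2:]) = 2"
proof -
  have r: "r > 0" using assms(1) prime_gt_0_int by blast
  have poly_eq: "poly [:n0, n1, n2:] y = n2 * y^2 + n1 * y + n0" for y
    by (simp add: algebra_simps power2_eq_square)
  have root_b: "r dvd n2 * b^2 + n1 * b + n0" using assms(2) by (simp only: poly_eq)
  let ?L = "{y \<in> {0..<r}. r dvd 1 * y + (- b)}"
  let ?M = "{y \<in> {0..<r}. r dvd n2 * y + (n2 * b + n1)}"
  have "r dvd n2 * y^2 + n1 * y + n0 \<longleftrightarrow> r dvd (y - b) * (n2 * y + (n2 * b + n1))" for y
    unfolding quadratic_shift_factor[of n2 y n1 n0 b] using root_b by (rule dvd_add_right_iff)
  then have roots: "roots_mod r [:n0, n1, n2:] = ?L \<union> ?M"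
    unfolding roots_mod_def poly_eq using assms(1) by (auto simp: prime_dvd_mult_iff)
  have disjoint: "?L \<inter> ?M = {}"
  proof (rule ccontr)
    assume "?L \<inter> ?M \<noteq> {}"
    then obtain y where y_b: "r dvd y - b" and y: "r dvd n2 * y + (n2 * b + n1)" by auto
    have "r dvd (n2 * y + (n2 * b + n1)) - n2 * (y - b)" by (rule dvd_diff[OF y dvd_mult[OF y_b]])
    then have "r dvd 2 * n2 * b + n1" by (simp add: algebra_simps)
    then have "r dvd b * (2 * n2 * b + n1) - (n2 * b^2 + n1 * b + n0)"
      by (rule dvd_diff[OF dvd_mult root_b])
    moreover have "b * (2 * n2 * b + n1) - (n2 * b^2 + n1 * b + n0) = n2 * b^2 - n0"
      by (simp add: algebra_simps power2_eq_square)
    ultimately show False using assms(4) by simp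
  qed
  have card_L: "card ?L = 1" by (rule card_linear_roots_mod[OF r]) simp
  have card_M: "card ?M = 1" by (rule card_linear_roots_mod[OF r assms(3)])
  have finite: "finite ?L" "finite ?M" by (auto intro: finite_subset[of _ "{0..<r}"])
  show ?thesis
    unfolding roots card_Un_disjoint[OF finite disjoint] card_L card_M by simp
qed

lemma coprime_prime_iff_not_dvd:
  fixes r :: "'a :: semiring_gcd"
  assumes "prime r"
  shows "coprime v r \<longleftrightarrow> \<not> r dvd v"
proof
  assume "coprime v r"
  show "\<not> r dvd v"
  proof
    assume "r dvd v"
    with \<open>coprime v r\<close> have "is_unit r" by (rule coprime_common_divisor) simp
    with assms show False by (simp add: not_prime_unit)
  qed
next
  assume "\<not> r dvd v"
  with assms have "coprime r v" by (rule prime_imp_coprime)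
  then show "coprime v r" by (rule coprime_commute[THEN iffD1])
qed

lemma gcd_prime_prod_nontrivial_iff:
  fixes p q v :: int
  assumes "prime p" "prime q" "p \<noteq> q"
  shows "1 < gcd v (p * q) \<and> gcd v (p * q) < p * q \<longleftrightarrow> ((p dvd v) \<noteq> (q dvd v))"
proof -
  have "p > 0" "q > 0" using assms(1,2) prime_gt_0_int by auto
  then have pq: "p * q > 0" and g_pos: "gcd v (p * q) > 0" by simp_all
  have g_le: "gcd v (p * q) \<le> p * q" using pq by (intro zdvd_imp_le) simp_all
  have "gcd v (p * q) = p * q \<longleftrightarrow> p * q dvd v"
    using gcd_proj2_iff[of v "p * q"] pq by simp
  also have "\<dots> \<longleftrightarrow> p dvd v \<and> q dvd v"
    using divides_mult[of p v q] primes_coprime[OF assms] by (auto dest: dvd_mult_left dvd_mult_right)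
  finally have g_full: "gcd v (p * q) = p * q \<longleftrightarrow> p dvd v \<and> q dvd v" .
  have "gcd v (p * q) = 1 \<longleftrightarrow> coprime v (p * q)" by (rule coprime_iff_gcd_eq_1[symmetric])
  also have "\<dots> \<longleftrightarrow> \<not> p dvd v \<and> \<not> q dvd v"
    using coprime_prime_iff_not_dvd[OF assms(1)] coprime_prime_iff_not_dvd[OF assms(2)] by simp
  finally have g_one: "gcd v (p * q) = 1 \<longleftrightarrow> \<not> p dvd v \<and> \<not> q dvd v" .
  show ?thesis using g_pos g_le g_full g_one by linarith
qed

lemma bij_betw_mod_pair:
  fixes p q :: int
  assumes "p > 0" "q > 0" "coprime p q"
  shows "bij_betw (\<lambda>x. (x mod p, x mod q)) {0..<p * q} ({0..<p} \<times> {0..<q})"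
proof -
  let ?f = "\<lambda>x. (x mod p, x mod q)"
  have inj: "inj_on ?f {0..<p * q}"
  proof (rule inj_onI)
    fix x y assume x: "x \<in> {0..<p * q}" and y: "y \<in> {0..<p * q}" and "?f x = ?f y"
    then have "[x = y] (mod p)" "[x = y] (mod q)" by (simp_all add: cong_def)
    then have "[x = y] (mod p * q)" using assms(3) by (rule coprime_cong_mult)
    with x y show "x = y" by (auto intro: cong_less_imp_eq_int)
  qed
  moreover have "?f ` {0..<p * q} \<subseteq> {0..<p} \<times> {0..<q}" using assms by auto
  moreover have "card (?f ` {0..<p * q}) = card ({0..<p} \<times> {0..<q})"
    using card_image[OF inj] assms by (simp add: card_cartesian_product nat_mult_distrib)
  ultimately show ?thesis
    by (simp add: bij_betw_def card_subset_eq)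
qed

lemma card_residue_pairs:
  fixes p q :: int
  assumes "p > 0" "q > 0" "coprime p q"
  shows "card {x \<in> {0..<p * q}. P (x mod p) (x mod q)} = card {(u, v) \<in> {0..<p} \<times> {0..<q}. P u v}"
proof -
  have "card {x \<in> {0..<p * q}. P (x mod p) (x mod q)}
      = card {y \<in> {0..<p} \<times> {0..<q}. case y of (u, v) \<Rightarrow> P u v}"
    by (rule bij_betw_same_card, rule bij_betw_Collect[OF bij_betw_mod_pair[OF assms]]) simp
  also have "{y \<in> {0..<p} \<times> {0..<q}. case y of (u, v) \<Rightarrow> P u v} = {(u, v) \<in> {0..<p} \<times> {0..<q}. P u v}"
    by auto
  finally show ?thesis .
qed

lemma card_product_xor:
  assumes "finite X" "finite Y" "A \<subseteq> X" "B \<subseteq> Y"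
  shows "card {(u, v) \<in> X \<times> Y. (u \<in> A) \<noteq> (v \<in> B)}
    = card A * (card Y - card B) + (card X - card A) * card B"
proof -
  have "{(u, v) \<in> X \<times> Y. (u \<in> A) \<noteq> (v \<in> B)} = A \<times> (Y - B) \<union> (X - A) \<times> B"
    using assms(3,4) by auto
  moreover have "finite A" "finite B" using assms finite_subset by auto
  ultimately show ?thesis
    using assms by (simp add: card_Un_disjoint card_cartesian_product card_Diff_subset Times_Int_Times)
qed

lemma suitable_prime_prod_iff:
  fixes p q :: int
  assumes "prime p" "prime q" "p \<noteq> q"
  shows "suitable (p * q) f x \<longleftrightarrow>
    x \<in> {0..<p * q} \<and> (x mod p \<in> roots_mod p f) \<noteq> (x mod q \<in> roots_mod q f)"
  using assms prime_gt_0_int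
  by (simp add: suitable_def gcd_prime_prod_nontrivial_iff dvd_poly_iff_mod_in_roots_mod)

lemma nu_prime_prod:
  fixes p q :: int
  assumes "prime p" "prime q" "p \<noteq> q"
  shows "nu (p * q) f = card (roots_mod p f) * (nat q - card (roots_mod q f))
    + (nat p - card (roots_mod p f)) * card (roots_mod q f)"
proof -
  have "p > 0" "q > 0" "coprime p q" using assms prime_gt_0_int primes_coprime by auto
  have "nu (p * q) f
      = card {x \<in> {0..<p * q}. (x mod p \<in> roots_mod p f) \<noteq> (x mod q \<in> roots_mod q f)}"
    unfolding nu_def suitable_prime_prod_iff[OF assms] by (auto intro!: arg_cong[where f = card])
  also have "\<dots> = card {(u, v) \<in> {0..<p} \<times> {0..<q}. (u \<in> roots_mod p f) \<noteq> (v \<in> roots_mod q f)}"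
    by (rule card_residue_pairs) fact+
  also have "\<dots> = card (roots_mod p f) * (nat q - card (roots_mod q f))
      + (nat p - card (roots_mod p f)) * card (roots_mod q f)"
    using card_product_xor[OF finite_atLeastLessThan_int finite_atLeastLessThan_int
        roots_mod_subset roots_mod_subset] by simp
  finally show ?thesis .
qed

theorem corollary2p12:
  fixes p q N b n0 n1 n2 :: int and f :: "int poly"
  assumes "prime p" and "prime q" and "p \<noteq> q" and "N = p * q"
    and "f = [:n0, n1, n2:]" and "degree f = 2"
    and "poly f b = N"
    and "gcd (n2 * b) N = 1" and "gcd N (n2 * b^2 - n0) = 1"
  shows "int (nu N f) = 2 * p + 2 * q - 8"
proof -
  have card_roots: "card (roots_mod r f) = 2" if "prime r" "r dvd N" for r
  proof -
    obtain k where k: "N = r * k" using \<open>r dvd N\<close> by blast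
    have "coprime (n2 * b) N" using assms(8) by (simp add: coprime_iff_gcd_eq_1)
    then have coprime: "coprime n2 r" using k by simp
    have not_dvd: "\<not> r dvd n2 * b^2 - n0"
    proof
      assume "r dvd n2 * b^2 - n0"
      then have "r dvd 1" using \<open>r dvd N\<close> assms(9) by (metis gcd_greatest)
      then show False using \<open>prime r\<close> by (simp add: not_prime_unit)
    qed
    have "r dvd poly [:n0, n1, n2:] b"
      using \<open>r dvd N\<close> by (simp only: assms(5)[symmetric] assms(7))
    then show ?thesis
      unfolding assms(5) by (rule card_roots_mod_quadratic[OF \<open>prime r\<close> _ coprime not_dvd])
  qed
  have "nu N f = 2 * (nat q - 2) + (nat p - 2) * 2"
    using nu_prime_prod[OF assms(1-3)] card_roots assms(1,2,4) by simp
  then show ?thesis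
    using prime_ge_2_int[OF assms(1)] prime_ge_2_int[OF assms(2)] by (simp add: of_nat_diff)
qed

end
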